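(* Let $m \ge 2$ be an integer, and let $k_m$ be a number with the following property: for every integer $k \ge k_m$ and every admissible $k$-tuple $\{g_jx + h_j\}_{j=1}^k$ of linear forms in $\mathbb{Z}[x]$ with $g_1,\ldots,g_k > 0$ and $\prod_{1 \le i < j \le k}(g_ih_j - g_jh_i) \ne 0$, the set $\{g_jn + h_j\}_{j=1}^k$ contains at least $m$ primes for infinitely many $n \in \mathbb{N}$. Let $k \ge k_m$ be an integer. Let $b_1,\ldots,b_k$ be distinct integers such that the $k$-tuple $\{x + b_j\}_{j=1}^k$ is admissible, and let $g$ be any positive integer coprime with $b_1 b_2\cdots b_k$. Then there is a subset $\{h_1,\ldots,h_m\} \subseteq \{b_1,\ldots,b_k\}$ (with $m$ elements) such that for infinitely many $n \in \mathbb{N}$, the numbers $gn + h_1,\ldots,gn + h_m$ are consecutive primes (i.e., they are all prime and, listed in increasing order, no other prime lies between any two of them).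
   Context: A $k$-tuple of linear forms $\{g_jx + h_j\}_{j=1}^k$ in $\mathbb{Z}[x]$ is called admissible if the polynomial $f(x) = \prod_{j=1}^k (g_jx + h_j)$ has no fixed prime divisor, i.e. for every prime $p$, $\#\{n \bmod p : f(n) \equiv 0 \bmod p\} < p$. (By the Maynard–Tao theorem, a number $k_m$ with the stated property exists for every $m \ge 2$; e.g. any $k_m$ with $k_m \log k_m > e^{8m+4}$ works.) *)

theory Defs
  imports "HOL-Computational_Algebra.Primes"
begin

text \<open>A k-tuple of linear forms g_j x + h_j (j < k) is encoded by two functions
  g h :: nat => int, restricted to indices j < k.\<close>

definition admissible :: "nat \<Rightarrow> (nat \<Rightarrow> int) \<Rightarrow> (nat \<Rightarrow> int) \<Rightarrow> bool" where
  "admissible k g h \<longleftrightarrow>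
     (\<forall>p::nat. prime p \<longrightarrow>
        card {r \<in> {0..<int p}. int p dvd (\<Prod>j<k. g j * r + h j)} < p)"

definition prime_values :: "nat \<Rightarrow> (nat \<Rightarrow> int) \<Rightarrow> (nat \<Rightarrow> int) \<Rightarrow> nat \<Rightarrow> int set" where
  "prime_values k g h n = {q. prime q \<and> q \<in> (\<lambda>j. g j * int n + h j) ` {..<k}}"

definition km_property :: "nat \<Rightarrow> nat \<Rightarrow> bool" where
  "km_property m km \<longleftrightarrow>
     (\<forall>k \<ge> km. \<forall>g h :: nat \<Rightarrow> int.
        admissible k g h \<and> (\<forall>j<k. g j > 0) \<and>
        (\<Prod>i<k. \<Prod>j\<in>{i<..<k}. g i * h j - g j * h i) \<noteq> 0
        \<longrightarrow> infinite {n::nat. m \<le> card (prime_values k g h n)})"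

definition consecutive_primes :: "int set \<Rightarrow> bool" where
  "consecutive_primes V \<longleftrightarrow>
     (\<forall>v\<in>V. prime v) \<and> (\<forall>q. prime q \<and> Min V \<le> q \<and> q \<le> Max V \<longrightarrow> q \<in> V)"

end

theory Submission
  imports Defs "HOL-Number_Theory.Cong"
begin

(*
  Sieve out the gaps. Every integer c with min b_j < c < max b_j that is not one of the b_j gets its
  own prime p_c exceeding g and the diameter of the b_j, and r is chosen with p_c | g r + c for all
  gaps c (Chinese remainder theorem; g is invertible modulo p_c). Along n = M t + r with M the product
  of the p_c, every g n + c is then a proper multiple of p_c once t is large, while the tuple
  (g M) t + (g r + b_j) stays admissible: a prime dividing g divides no b_j, and p_c cannot divide
  g r + b_j because 0 < |b_j - c| < p_c. The Maynard-Tao property yields infinitely many t for which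
  at least m of the numbers g n + b_j are prime; as no prime lies at a gap, the m smallest of them are
  consecutive primes. There are only finitely many m-subsets of the b_j, so one of them occurs for
  infinitely many n.
*)

lemma sorted_wrt_less_take_downward_closed:
  fixes xs :: "'a::linorder list"
  assumes "sorted_wrt (<) xs" "c \<in> set xs" "h \<in> set (take m xs)" "c \<le> h"
  shows "c \<in> set (take m xs)"
  using assms
proof (induction xs arbitrary: m)
  case Nil
  then show ?case by simp
next
  case (Cons a xs)
  then obtain m' where m: "m = Suc m'"
    by (cases m) auto
  show ?case
  proof (cases "c = a")
    case False
    with Cons.prems have "c \<in> set xs" "a < c" by auto
    with Cons.prems m have "h \<in> set (take m' xs)" by auto
    with Cons.IH[of m'] Cons.prems \<open>c \<in> set xs\<close> m show ?thesis by auto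
  qed (simp add: m)
qed

lemma card_roots_affine_substitution_le:
  fixes G s :: int and b :: "nat \<Rightarrow> int" and p :: nat
  assumes p: "prime p" and not_dvd: "\<not> int p dvd G"
  shows "card {r \<in> {0..<int p}. int p dvd (\<Prod>j<k. G * r + (s + b j))}
       \<le> card {r \<in> {0..<int p}. int p dvd (\<Prod>j<k. r + b j)}"
proof -
  have pi: "prime (int p)"
    using p by simp
  define f where "f r = (G * r + s) mod int p" for r
  have "coprime G (int p)"
    using prime_imp_coprime[OF pi not_dvd] by (simp add: ac_simps)
  have "inj_on f {0..<int p}"
  proof (rule inj_onI)
    fix x y
    assume xy: "x \<in> {0..<int p}" "y \<in> {0..<int p}" and "f x = f y"
    then have "[G * x + s = G * y + s] (mod int p)"
      by (simp add: f_def cong_def)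
    then have "[x = y] (mod int p)"
      using \<open>coprime G (int p)\<close> by (simp add: cong_add_rcancel cong_mult_lcancel)
    with xy show "x = y"
      using cong_less_imp_eq_int by auto
  qed
  moreover have "int p dvd G * r + (s + b j) \<longleftrightarrow> int p dvd f r + b j" for r j
    by (simp add: f_def dvd_eq_mod_eq_0 mod_add_left_eq add.assoc)
  then have "f ` {r \<in> {0..<int p}. int p dvd (\<Prod>j<k. G * r + (s + b j))}
      \<subseteq> {r \<in> {0..<int p}. int p dvd (\<Prod>j<k. r + b j)}"
    using pi p prime_gt_0_nat by (auto simp: prime_dvd_prod_iff f_def)
  ultimately show ?thesis
    by (intro card_inj_on_le) (auto intro: inj_on_subset finite_subset[of _ "{0..<int p}"])
qed

lemma admissible_affine_substitution:
  fixes G s :: int and b :: "nat \<Rightarrow> int"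
  assumes adm: "admissible k (\<lambda>_. 1) b"
    and coprime_values: "\<And>p. prime p \<Longrightarrow> int p dvd G \<Longrightarrow> \<not> int p dvd (\<Prod>j<k. s + b j)"
  shows "admissible k (\<lambda>_. G) (\<lambda>j. s + b j)"
  unfolding admissible_def
proof (intro allI impI)
  fix p :: nat
  assume p: "prime p"
  show "card {r \<in> {0..<int p}. int p dvd (\<Prod>j<k. G * r + (s + b j))} < p"
  proof (cases "int p dvd G")
    case True
    have "int p dvd G * r + (s + b j) \<longleftrightarrow> int p dvd s + b j" for r j
      by (intro dvd_add_right_iff dvd_mult2 True)
    then have no_roots: "{r \<in> {0..<int p}. int p dvd (\<Prod>j<k. G * r + (s + b j))} = {}"
      using coprime_values[OF p True] p by (auto simp: prime_dvd_prod_iff)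
    show ?thesis
      unfolding no_roots using prime_gt_0_nat[OF p] by simp
  next
    case False
    have "card {r \<in> {0..<int p}. int p dvd (\<Prod>j<k. r + b j)} < p"
      using adm p unfolding admissible_def by simp
    with card_roots_affine_substitution_le[OF p False, where k = k and s = s and b = b]
    show ?thesis
      by (rule le_less_trans)
  qed
qed

lemma exists_inj_primes_above:
  fixes I :: "'a set" and B :: nat
  assumes "finite I"
  shows "\<exists>p :: 'a \<Rightarrow> nat. inj_on p I \<and> (\<forall>i\<in>I. prime (p i) \<and> B < p i)"
proof -
  have "{p. prime p \<and> B < p} = {p. prime p} - {..B}"
    by auto
  then have "infinite {p. prime p \<and> B < p}"
    using primes_infinite by (simp add: Diff_infinite_finite)
  then obtain P where "finite P" "card P = card I" "P \<subseteq> {p. prime p \<and> B < p}"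
    using infinite_arbitrarily_large by blast
  with card_le_inj[OF assms \<open>finite P\<close>] obtain p where "p ` I \<subseteq> P" "inj_on p I"
    by auto
  with \<open>P \<subseteq> {p. prime p \<and> B < p}\<close> show ?thesis
    by blast
qed

lemma exists_sieving_residue:
  fixes g :: int and I :: "int set" and p :: "int \<Rightarrow> nat"
  assumes fin: "finite I" and inj: "inj_on p I"
    and primes: "\<forall>c\<in>I. prime (p c) \<and> \<not> int (p c) dvd g"
  shows "\<exists>r \<ge> 0. \<forall>c\<in>I. int (p c) dvd g * r + c"
proof -
  have "\<forall>c\<in>I. \<exists>u. [g * u = 1] (mod int (p c))"
  proof
    fix c assume "c \<in> I"
    with primes have "prime (int (p c))" "\<not> int (p c) dvd g"
      by auto
    then have "coprime g (int (p c))"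
      using prime_imp_coprime coprime_commute by blast
    then show "\<exists>u. [g * u = 1] (mod int (p c))"
      by (rule cong_solve_coprime_int)
  qed
  then obtain u where u: "\<forall>c\<in>I. [g * u c = 1] (mod int (p c))"
    by (auto dest!: bchoice)
  have "\<forall>c\<in>I. \<forall>d\<in>I. c \<noteq> d \<longrightarrow> coprime (p c) (p d)"
    using inj primes primes_coprime unfolding inj_on_def by blast
  from chinese_remainder_nat[OF fin this, of "\<lambda>c. nat ((- c * u c) mod int (p c))"]
  obtain x where x: "\<forall>c\<in>I. [x = nat ((- c * u c) mod int (p c))] (mod p c)"
    by blast
  have "int (p c) dvd g * int x + c" if c: "c \<in> I" for c
  proof -
    have "[int x = int (nat ((- c * u c) mod int (p c)))] (mod int (p c))"
      using x c cong_int_iff by blast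
    then have "[int x = - c * u c] (mod int (p c))"
      using c primes prime_gt_0_nat by (simp add: cong_def)
    then have "[g * int x = - c * (g * u c)] (mod int (p c))"
      by (metis cong_scalar_left mult.left_commute)
    also have "[- c * (g * u c) = - c * 1] (mod int (p c))"
      using u c by (intro cong_scalar_left) auto
    finally show ?thesis
      by (simp add: cong_iff_dvd_diff)
  qed
  then show ?thesis
    by (intro exI[of _ "int x"]) auto
qed

lemma consecutive_primes_smallest_prime_shifts:
  fixes B :: "int set" and s :: int
  assumes fin: "finite B" and "0 < m" and m_le: "m \<le> card {c \<in> B. prime (s + c)}"
    and gaps: "\<And>c. Min B \<le> c \<Longrightarrow> c \<le> Max B \<Longrightarrow> c \<notin> B \<Longrightarrow> \<not> prime (s + c)"
  shows "\<exists>H \<subseteq> B. card H = m \<and> consecutive_primes ((+) s ` H)"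
proof -
  define P where "P = {c \<in> B. prime (s + c)}"
  define xs where "xs = sorted_list_of_set P"
  define H where "H = set (take m xs)"
  have finP: "finite P"
    using fin by (simp add: P_def)
  have xs: "sorted_wrt (<) xs" "distinct xs" "set xs = P" "length xs = card P"
    using finP by (auto simp: xs_def)
  have "H \<subseteq> P"
    using set_take_subset[of m xs] by (simp add: H_def xs(3))
  then have HB: "H \<subseteq> B"
    by (auto simp: P_def)
  have card_H: "card H = m"
    using xs m_le by (simp add: H_def P_def distinct_card)
  then have "finite H" "H \<noteq> {}"
    using \<open>0 < m\<close> card_ge_0_finite by auto
  let ?V = "(+) s ` H"
  have "q \<in> ?V" if q: "prime q" "Min ?V \<le> q" "q \<le> Max ?V" for q
  proof -
    have "Min ?V \<in> ?V" "Max ?V \<in> ?V"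
      using \<open>finite H\<close> \<open>H \<noteq> {}\<close> by auto
    then obtain h1 h2 where h: "h1 \<in> H" "h2 \<in> H" "Min ?V = s + h1" "Max ?V = s + h2"
      by blast
    define c where "c = q - s"
    have q_eq: "q = s + c"
      by (simp add: c_def)
    have "h1 \<le> c" "c \<le> h2"
      using q h by (auto simp: c_def)
    moreover have "Min B \<le> h1" "h2 \<le> Max B"
      using h HB fin by auto
    ultimately have "c \<in> B"
      using gaps[of c] q(1) q_eq by fastforce
    with q(1) q_eq have "c \<in> P"
      by (simp add: P_def)
    with sorted_wrt_less_take_downward_closed[OF xs(1)] have "c \<in> H"
      using xs(3) h(2) \<open>c \<le> h2\<close> unfolding H_def by blast
    then show ?thesis
      using q_eq by blast
  qed
  moreover have "\<forall>v\<in>?V. prime v"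
    using \<open>H \<subseteq> P\<close> by (auto simp: P_def)
  ultimately show ?thesis
    using HB card_H unfolding consecutive_primes_def by blast
qed

lemma admissible_sieved_tuple:
  fixes b :: "nat \<Rightarrow> int" and g r :: int and I :: "int set" and p :: "int \<Rightarrow> nat"
  assumes adm: "admissible k (\<lambda>_. 1) b" and cop: "coprime g (\<Prod>j<k. b j)"
    and fin: "finite I" and primes: "\<forall>c\<in>I. prime (p c)"
    and sieve: "\<forall>c\<in>I. int (p c) dvd g * r + c"
    and far: "\<forall>c\<in>I. \<forall>j<k. 0 < \<bar>b j - c\<bar> \<and> \<bar>b j - c\<bar> < int (p c)"
  shows "admissible k (\<lambda>_. g * (\<Prod>c\<in>I. int (p c))) (\<lambda>j. g * r + b j)"
proof (rule admissible_affine_substitution[OF adm])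
  fix q :: nat
  assume q: "prime q" and q_dvd: "int q dvd g * (\<Prod>c\<in>I. int (p c))"
  have qi: "prime (int q)"
    using q by simp
  show "\<not> int q dvd (\<Prod>j<k. g * r + b j)"
  proof
    assume "int q dvd (\<Prod>j<k. g * r + b j)"
    then obtain j where j: "j < k" "int q dvd g * r + b j"
      using qi by (auto simp: prime_dvd_prod_iff)
    from q_dvd qi consider "int q dvd g" | c where "c \<in> I" "int q dvd int (p c)"
      by (auto simp: prime_dvd_mult_iff prime_dvd_prod_iff[OF fin])
    then show False
    proof cases
      case 1
      with j have "int q dvd b j"
        by (metis dvd_add_right_iff dvd_mult2)
      with j(1) have "int q dvd (\<Prod>j<k. b j)"
        by (meson dvd_prodI finite_lessThan lessThan_iff dvd_trans)
      with 1 cop qi show False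
        using coprime_common_divisor not_prime_unit by blast
    next
      case (2 c)
      with q primes have "q = p c"
        by (metis int_dvd_int_iff primes_dvd_imp_eq)
      with j(2) sieve \<open>c \<in> I\<close> have "int (p c) dvd b j - c"
        by (metis add_diff_cancel_left dvd_diff)
      moreover have "b j - c \<noteq> 0" "\<bar>b j - c\<bar> < int (p c)"
        using far \<open>c \<in> I\<close> j(1) by auto
      ultimately show False
        using dvd_imp_le_int[of "b j - c" "int (p c)"] by simp
    qed
  qed
qed

lemma shifted_tuple_cross_differences_nonzero:
  fixes b :: "nat \<Rightarrow> int" and G s :: int
  assumes "inj_on b {..<k}" "G \<noteq> 0"
  shows "(\<Prod>i<k. \<Prod>j\<in>{i<..<k}. G * (s + b j) - G * (s + b i)) \<noteq> 0"
proof -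
  have "b j \<noteq> b i" if "i < k" "j \<in> {i<..<k}" for i j
    using assms(1) that by (auto dest: inj_onD)
  then show ?thesis
    using assms(2) by (simp add: prod_zero_iff right_diff_distrib[symmetric])
qed

lemma card_prime_values_shifted_le:
  fixes b :: "nat \<Rightarrow> int" and G s :: int
  shows "card (prime_values k (\<lambda>_. G) (\<lambda>j. s + b j) t)
       \<le> card {c \<in> b ` {..<k}. prime (G * int t + s + c)}"
proof -
  have "prime_values k (\<lambda>_. G) (\<lambda>j. s + b j) t
      = (\<lambda>c. G * int t + s + c) ` {c \<in> b ` {..<k}. prime (G * int t + s + c)}"
    unfolding prime_values_def by (auto simp: add.assoc)
  then show ?thesis
    by (simp add: card_image_le)
qed

lemma km_property_infinite_prime_shifts:
  fixes b :: "nat \<Rightarrow> int" and G s :: int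
  assumes "km_property m km" "km \<le> k" "inj_on b {..<k}"
    and "admissible k (\<lambda>_. G) (\<lambda>j. s + b j)" "G > 0"
  shows "infinite {t. m \<le> card {c \<in> b ` {..<k}. prime (G * int t + s + c)}}"
proof -
  have "infinite {t. m \<le> card (prime_values k (\<lambda>_. G) (\<lambda>j. s + b j) t)}"
    using assms shifted_tuple_cross_differences_nonzero[of b k G s]
    unfolding km_property_def by blast
  moreover have "{t. m \<le> card (prime_values k (\<lambda>_. G) (\<lambda>j. s + b j) t)}
      \<subseteq> {t. m \<le> card {c \<in> b ` {..<k}. prime (G * int t + s + c)}}"
    using card_prime_values_shifted_le[of k G s b] le_trans by blast
  ultimately show ?thesis
    by (rule infinite_super[rotated])
qed

lemma sieved_value_not_prime:
  fixes g M r c :: int and p t :: nat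
  assumes "prime p" "int p dvd M" "int p dvd g * r + c"
    and "g > 0" "M > 0" "r \<ge> 0" "int p - c < int t"
  shows "\<not> prime (g * (M * int t + r) + c)"
proof
  assume prime_value: "prime (g * (M * int t + r) + c)"
  have "int p dvd g * M * int t + (g * r + c)"
    using assms(2,3) by simp
  then have "int p dvd g * (M * int t + r) + c"
    by (simp add: algebra_simps)
  with prime_value \<open>prime p\<close> have "int p = g * (M * int t + r) + c"
    by (simp add: primes_dvd_imp_eq)
  moreover have "int t \<le> g * (M * int t + r)"
    using mult_right_mono[of 1 M "int t"] mult_right_mono[of 1 g "M * int t + r"] assms(4-6)
    by simp
  ultimately show False
    using assms(7) by linarith
qed

lemma gap_distance_bounds:
  fixes B :: "int set"
  assumes "finite B" "x \<in> B" "c \<in> {Min B..Max B} - B"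
  shows "0 < \<bar>x - c\<bar> \<and> \<bar>x - c\<bar> \<le> Max B - Min B"
proof -
  have "Min B \<le> x" "x \<le> Max B" "x \<noteq> c"
    using assms by auto
  moreover have "Min B \<le> c" "c \<le> Max B"
    using assms(3) by auto
  ultimately show ?thesis
    by (simp add: abs_le_iff)
qed

lemma exists_sieving_progression:
  fixes b :: "nat \<Rightarrow> int" and g :: int
  assumes adm: "admissible k (\<lambda>_. 1) b" and g: "g > 0" and cop: "coprime g (\<Prod>j<k. b j)"
  shows "\<exists>M r N. M > 0 \<and> r \<ge> 0 \<and> admissible k (\<lambda>_. g * M) (\<lambda>j. g * r + b j) \<and>
           (\<forall>t \<ge> N. \<forall>c. Min (b ` {..<k}) \<le> c \<and> c \<le> Max (b ` {..<k}) \<and> c \<notin> b ` {..<k}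
              \<longrightarrow> \<not> prime (g * (M * int t + r) + c))"
proof -
  define B where "B = b ` {..<k}"
  define I where "I = {Min B..Max B} - B"
  have "finite I"
    by (simp add: I_def)
  obtain p :: "int \<Rightarrow> nat" where p_inj: "inj_on p I"
    and p: "\<forall>c\<in>I. prime (p c) \<and> nat g + nat (Max B - Min B) < p c"
    using exists_inj_primes_above[OF \<open>finite I\<close>] by blast
  have "\<not> int (p c) dvd g" if "c \<in> I" for c
    using p that g zdvd_imp_le[of "int (p c)" g] by fastforce
  with p obtain r where "r \<ge> 0" and r: "\<forall>c\<in>I. int (p c) dvd g * r + c"
    using exists_sieving_residue[OF \<open>finite I\<close> p_inj] by blast
  define M where "M = (\<Prod>c\<in>I. int (p c))"
  have "M > 0"
    using p prime_gt_0_nat by (auto simp: M_def intro: prod_pos)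
  have "0 < \<bar>b j - c\<bar> \<and> \<bar>b j - c\<bar> < int (p c)" if "c \<in> I" "j < k" for c j
  proof -
    have "0 < \<bar>b j - c\<bar> \<and> \<bar>b j - c\<bar> \<le> Max B - Min B"
      using gap_distance_bounds[of B "b j" c] that by (simp add: B_def I_def)
    moreover have "nat g + nat (Max B - Min B) < p c"
      using p that(1) by blast
    ultimately show ?thesis
      by linarith
  qed
  then have "admissible k (\<lambda>_. g * M) (\<lambda>j. g * r + b j)"
    unfolding M_def using admissible_sieved_tuple[OF adm cop \<open>finite I\<close>] p r by blast
  moreover
  define N where "N = Suc (\<Sum>c\<in>I. nat (int (p c) - c))"
  have "\<not> prime (g * (M * int t + r) + c)" if "N \<le> t" "c \<in> I" for t c
  proof (rule sieved_value_not_prime)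
    show "int (p c) dvd M"
      unfolding M_def using \<open>finite I\<close> \<open>c \<in> I\<close> by (rule dvd_prodI)
    have "nat (int (p c) - c) < t"
      using \<open>N \<le> t\<close> member_le_sum[of c I "\<lambda>c. nat (int (p c) - c)"] \<open>finite I\<close> \<open>c \<in> I\<close>
      by (simp add: N_def)
    then show "int (p c) - c < int t"
      by linarith
  qed (use p r \<open>c \<in> I\<close> \<open>M > 0\<close> \<open>r \<ge> 0\<close> g in auto)
  then have "\<forall>t \<ge> N. \<forall>c. Min B \<le> c \<and> c \<le> Max B \<and> c \<notin> B \<longrightarrow> \<not> prime (g * (M * int t + r) + c)"
    by (auto simp: I_def)
  ultimately show ?thesis
    using \<open>M > 0\<close> \<open>r \<ge> 0\<close> unfolding B_def by blast
qed

theorem theorem1: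
  fixes m km k :: nat and b :: "nat \<Rightarrow> int" and g :: int
  assumes "m \<ge> 2"
    and "km_property m km"
    and "k \<ge> km"
    and "inj_on b {..<k}"
    and "admissible k (\<lambda>_. 1) b"
    and "g > 0"
    and "coprime g (\<Prod>j<k. b j)"
  shows "\<exists>H. H \<subseteq> b ` {..<k} \<and> card H = m \<and>
           infinite {n::nat. consecutive_primes ((\<lambda>h. g * int n + h) ` H)}"
proof -
  define B where "B = b ` {..<k}"
  obtain M r N where "M > 0" "r \<ge> 0" and adm: "admissible k (\<lambda>_. g * M) (\<lambda>j. g * r + b j)"
    and gaps: "\<forall>t \<ge> N. \<forall>c. Min B \<le> c \<and> c \<le> Max B \<and> c \<notin> B \<longrightarrow> \<not> prime (g * (M * int t + r) + c)"
    using exists_sieving_progression[OF assms(5-7)] unfolding B_def by blast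
  define n where "n t = nat (M * int t + r)" for t
  have int_n: "int (n t) = M * int t + r" for t
    using \<open>M > 0\<close> \<open>r \<ge> 0\<close> by (simp add: n_def)
  then have "inj n"
    using \<open>M > 0\<close> by (metis injI add_right_cancel mult_cancel_left of_nat_eq_iff less_irrefl)
  define T where "T = {t. m \<le> card {c \<in> B. prime (g * int (n t) + c)}} - {..<N}"
  have "infinite {t. m \<le> card {c \<in> B. prime (g * M * int t + g * r + c)}}"
    using km_property_infinite_prime_shifts[OF assms(2-4) adm] \<open>M > 0\<close> assms(6) by (simp add: B_def)
  then have inf_T: "infinite T"
    unfolding T_def int_n by (simp add: Diff_infinite_finite algebra_simps)
  have fin_H: "finite {H. H \<subseteq> B \<and> card H = m}"
    by (simp add: B_def)
  have witness: "\<forall>t\<in>T. \<exists>H\<in>{H. H \<subseteq> B \<and> card H = m}. consecutive_primes ((+) (g * int (n t)) ` H)"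
    using consecutive_primes_smallest_prime_shifts[of B m] gaps assms(1)
    by (auto simp: T_def B_def int_n)
  from pigeonhole_infinite_rel[OF inf_T fin_H witness] obtain H where H: "H \<subseteq> B" "card H = m"
    and "infinite {t \<in> T. consecutive_primes ((+) (g * int (n t)) ` H)}"
    by auto
  then have "infinite (n ` {t \<in> T. consecutive_primes ((+) (g * int (n t)) ` H)})"
    using \<open>inj n\<close> by (simp add: finite_image_iff inj_on_subset)
  then have "infinite {n. consecutive_primes ((\<lambda>h. g * int n + h) ` H)}"
    by (rule infinite_super[rotated]) auto
  with H show ?thesis
    unfolding B_def by blast
qed

end
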